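(* $\lim_{j\to\infty}p_j^*=\lim_{j\to\infty}u_j^*=1$ and $\lim_{j\to\infty}\lambda_j^*=0$, where $\lambda_j^*=1-u_j^*$.
   Context: $\Phi$ is the partial map of $\mathbb{R}^2$ defined for $p\ne0$ by $\Phi(p,u)=\bigl(p^2(u+1)-1,\ 1/p\bigr)$. For $n\ge1$, the trajectory $T_n$ is the (existing and unique) finite sequence $(p_{j,n},u_{j,n})$, $j=0,\dots,n$, with $(p_{j,n},u_{j,n})=\Phi(p_{j-1,n},u_{j-1,n})$ for $1\le j\le n$, $u_{0,n}=0$, $p_{n,n}=0$, and $p_{j,n}>0$ for $0\le j\le n-1$. For each $j\ge0$ the limit $p_j^*=\lim_{n\to\infty}p_{j,n}$ exists, and $u_j^*=\lim_{n\to\infty}u_{j,n}=1/p_{j-1}^*$ for $j\ge1$. *)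

theory Defs
  imports Complex_Main
begin

text \<open>The partial map Phi(p,u) = (p^2 (u+1) - 1, 1/p), meaningful for p \<noteq> 0.\<close>
definition Phi :: "real \<times> real \<Rightarrow> real \<times> real" where
  "Phi pu = (fst pu ^ 2 * (snd pu + 1) - 1, 1 / fst pu)"

definition is_traj :: "nat \<Rightarrow> (nat \<Rightarrow> real) \<Rightarrow> (nat \<Rightarrow> real) \<Rightarrow> bool" where
  "is_traj n P U \<longleftrightarrow>
     U 0 = 0 \<and> P n = 0 \<and> (\<forall>j<n. P j > 0) \<and>
     (\<forall>j\<in>{1..n}. (P j, U j) = Phi (P (j - 1), U (j - 1)))"

end

theory Submission
  imports Defs
begin

text \<open>
  In the limit one obtains an infinite positive orbit p* of the two-step recurrence
  p(j+1) = p(j)^2 (1/p(j-1) + 1) - 1 with p(1) = p(0)^2 - 1.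
  Such an orbit can never fall to a value below 1: from there it would keep decreasing
  by a fixed amount and become negative. Conversely, a finite trajectory can never rise
  to a value at least 1, since from there it would keep increasing and could not reach
  p(n) = 0; passing to the limit, p* never rises strictly above 1. Hence p* >= 1 is
  nonincreasing, and its limit L is a fixed point L = L^2 + L - 1, i.e. L = 1.
\<close>

text \<open>Since u(j) = 1/p(j-1), the map Phi gives p(j+1) = p_next (p(j-1)) (p(j)).\<close>
definition p_next :: "real \<Rightarrow> real \<Rightarrow> real" where
  "p_next a b = b\<^sup>2 * (1 / a + 1) - 1"

lemma p_next_ge:
  assumes "0 < a" "a \<le> b" "1 \<le> b"
  shows "b \<le> p_next a b"
proof -
  have "b * (b + 1) = b\<^sup>2 * (1 / b + 1)"
    using assms by (simp add: power2_eq_square field_simps)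
  also have "\<dots> \<le> b\<^sup>2 * (1 / a + 1)"
    using assms by (intro mult_left_mono) (simp_all add: frac_le)
  finally have "b * (b + 1) - 1 \<le> p_next a b"
    by (simp add: p_next_def)
  moreover have "b + 1 \<le> b * (b + 1)"
    using mult_right_mono[OF \<open>1 \<le> b\<close>, of "b + 1"] assms by simp
  ultimately show ?thesis by linarith
qed

lemma p_next_le:
  assumes "0 < b" "b \<le> a" "b \<le> c" "c \<le> 1"
  shows "p_next a b \<le> b - (1 - c)"
proof -
  have "b\<^sup>2 * (1 / a + 1) \<le> b\<^sup>2 * (1 / b + 1)"
    using assms by (intro mult_left_mono) (simp_all add: frac_le)
  also have "\<dots> = b + b * b"
    using assms by (simp add: power2_eq_square field_simps)
  also have "\<dots> \<le> b + c"
    using mult_mono[of b c b 1] assms by simp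
  finally show ?thesis by (simp add: p_next_def)
qed

lemma p_next_fixed_point:
  assumes "0 < L" "p_next L L = L"
  shows "L = 1"
proof -
  have "p_next L L = L + L\<^sup>2 - 1"
    using assms by (simp add: p_next_def power2_eq_square field_simps)
  then have "L\<^sup>2 = 1\<^sup>2" using assms by simp
  then show ?thesis using assms power2_eq_imp_eq by fastforce
qed

lemma tendsto_p_next [tendsto_intros]:
  assumes "(f \<longlongrightarrow> a) F" "(g \<longlongrightarrow> b) F" "a \<noteq> 0"
  shows "((\<lambda>x. p_next (f x) (g x)) \<longlongrightarrow> p_next a b) F"
  unfolding p_next_def using assms by (intro tendsto_intros)

lemma traj_Suc:
  assumes "is_traj n P U" "j < n"
  shows "P (Suc j) = (P j)\<^sup>2 * (U j + 1) - 1" "U (Suc j) = 1 / P j"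
  using assms unfolding is_traj_def Phi_def by auto

lemma traj_p_next:
  assumes "is_traj n P U" "Suc (Suc j) \<le> n"
  shows "P (Suc (Suc j)) = p_next (P j) (P (Suc j))"
  using traj_Suc[OF assms(1), of j] traj_Suc[OF assms(1), of "Suc j"] assms(2)
  by (simp add: p_next_def)

lemma traj_no_rise_above_one:
  assumes traj: "is_traj n P U" and "Suc j \<le> n"
  shows "\<not> (1 \<le> P (Suc j) \<and> P j \<le> P (Suc j))"
proof
  assume rise: "1 \<le> P (Suc j) \<and> P j \<le> P (Suc j)"
  have pos: "\<And>i. i < n \<Longrightarrow> 0 < P i"
    using traj unfolding is_traj_def by auto
  have "Suc j + k \<le> n \<longrightarrow> 1 \<le> P (Suc j + k) \<and> P (j + k) \<le> P (Suc j + k)" for k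
  proof (induction k)
    case 0
    then show ?case using rise by simp
  next
    case (Suc k)
    show ?case
    proof
      assume le: "Suc j + Suc k \<le> n"
      then have "P (Suc j + k) \<le> p_next (P (j + k)) (P (Suc j + k))"
        using Suc.IH pos[of "j + k"] by (intro p_next_ge) auto
      also have "\<dots> = P (Suc j + Suc k)"
        using traj_p_next[OF traj, of "j + k"] le by simp
      finally show "1 \<le> P (Suc j + Suc k) \<and> P (j + Suc k) \<le> P (Suc j + Suc k)"
        using Suc.IH le by simp
    qed
  qed
  from this[of "n - Suc j"] have "1 \<le> P n"
    using \<open>Suc j \<le> n\<close> by simp
  moreover have "P n = 0"
    using traj unfolding is_traj_def by simp
  ultimately show False by simp
qed

lemma orbit_no_fall_below_one:
  fixes P :: "nat \<Rightarrow> real"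
  assumes pos: "\<And>m. 0 < P m"
    and rec: "\<And>m. P (Suc (Suc m)) = p_next (P m) (P (Suc m))"
  shows "\<not> (P (Suc m) < 1 \<and> P (Suc m) \<le> P m)"
proof
  define c where "c = P (Suc m)"
  assume "P (Suc m) < 1 \<and> P (Suc m) \<le> P m"
  then have c: "c < 1" "P (Suc m) \<le> P m" unfolding c_def by auto
  have descent: "P (Suc m + k) \<le> c - real k * (1 - c) \<and> P (Suc m + k) \<le> P (m + k)" for k
  proof (induction k)
    case 0
    then show ?case using c by (simp add: c_def)
  next
    case (Suc k)
    have "real k * (1 - c) \<ge> 0" using c by simp
    then have "P (Suc m + k) \<le> c" using Suc.IH by linarith
    then have "p_next (P (m + k)) (P (Suc m + k)) \<le> P (Suc m + k) - (1 - c)"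
      using Suc.IH c pos[of "Suc m + k"] by (intro p_next_le) auto
    then have "P (Suc m + Suc k) \<le> P (Suc m + k) - (1 - c)"
      using rec[of "m + k"] by simp
    then show ?case using Suc.IH c by (simp add: algebra_simps)
  qed
  obtain k :: nat where "c / (1 - c) < real k"
    using reals_Archimedean2 by blast
  then have "c < real k * (1 - c)"
    using c by (simp add: field_simps)
  then have "P (Suc m + k) < 0"
    using descent[of k] by linarith
  then show False using pos[of "Suc m + k"] by simp
qed

lemma orbit_ge_one:
  fixes P :: "nat \<Rightarrow> real"
  assumes pos: "\<And>m. 0 < P m"
    and rec: "\<And>m. P (Suc (Suc m)) = p_next (P m) (P (Suc m))"
    and init: "P 1 = (P 0)\<^sup>2 - 1"
  shows "1 \<le> P m"
proof (induction m)
  case 0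
  have "1\<^sup>2 < (P 0)\<^sup>2" using init pos[of 1] by simp
  then show ?case using pos[of 0] power_less_imp_less_base by fastforce
next
  case (Suc m)
  then show ?case using orbit_no_fall_below_one[where P = P, OF pos rec, of m] by linarith
qed

lemma orbit_tendsto_one:
  fixes P :: "nat \<Rightarrow> real"
  assumes pos: "\<And>m. 0 < P m"
    and rec: "\<And>m. P (Suc (Suc m)) = p_next (P m) (P (Suc m))"
    and init: "P 1 = (P 0)\<^sup>2 - 1"
    and no_rise: "\<And>m. \<not> (1 < P (Suc m) \<and> P m < P (Suc m))"
  shows "P \<longlonglongrightarrow> 1"
proof -
  have ge_one: "\<And>m. 1 \<le> P m"
    using orbit_ge_one[OF pos rec init] .
  have "decseq P"
    using no_rise ge_one by (intro decseq_SucI) (meson not_le order.strict_trans1)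
  then obtain L where L: "P \<longlonglongrightarrow> L"
    using ge_one decseq_convergent by blast
  have "1 \<le> L"
    using ge_one by (intro tendsto_lowerbound[OF L]) simp_all
  have "(\<lambda>m. P (Suc (Suc m))) \<longlonglongrightarrow> p_next L L"
    unfolding rec using \<open>1 \<le> L\<close> by (intro tendsto_intros L LIMSEQ_Suc) simp
  moreover have "(\<lambda>m. P (Suc (Suc m))) \<longlonglongrightarrow> L"
    by (intro L LIMSEQ_Suc)
  ultimately have "p_next L L = L"
    by (rule LIMSEQ_unique)
  then have "L = 1"
    using \<open>1 \<le> L\<close> p_next_fixed_point by simp
  then show ?thesis
    using L by simp
qed

locale trajectory_limits =
  fixes p u :: "nat \<Rightarrow> nat \<Rightarrow> real" and pstar ustar :: "nat \<Rightarrow> real"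
  assumes traj: "\<forall>n\<ge>1. is_traj n (\<lambda>j. p j n) (\<lambda>j. u j n)"
    and plim: "\<forall>j. (\<lambda>n. p j n) \<longlonglongrightarrow> pstar j"
    and ulim: "\<forall>j. (\<lambda>n. u j n) \<longlonglongrightarrow> ustar j"
begin

lemma
  assumes "j < n"
  shows p_Suc: "p (Suc j) n = (p j n)\<^sup>2 * (u j n + 1) - 1"
    and u_Suc: "u (Suc j) n = 1 / p j n"
    and p_pos: "0 < p j n"
  using traj_Suc[of n "\<lambda>j. p j n" "\<lambda>j. u j n" j] traj assms
  by (auto simp: is_traj_def)

lemma u_0: "0 < n \<Longrightarrow> u 0 n = 0"
  using traj by (simp add: is_traj_def)

lemma pstar_Suc: "pstar (Suc m) = (pstar m)\<^sup>2 * (ustar m + 1) - 1"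
proof -
  have "(\<lambda>n. (p m n)\<^sup>2 * (u m n + 1) - 1) \<longlonglongrightarrow> (pstar m)\<^sup>2 * (ustar m + 1) - 1"
    using plim ulim by (intro tendsto_intros) auto
  moreover have "eventually (\<lambda>n. (p m n)\<^sup>2 * (u m n + 1) - 1 = p (Suc m) n) sequentially"
    using eventually_gt_at_top[of m] by eventually_elim (simp add: p_Suc)
  ultimately have "(\<lambda>n. p (Suc m) n) \<longlonglongrightarrow> (pstar m)\<^sup>2 * (ustar m + 1) - 1"
    by (rule Lim_transform_eventually)
  with plim show ?thesis
    using LIMSEQ_unique by blast
qed

lemma pstar_mult_ustar_Suc: "pstar m * ustar (Suc m) = 1"
proof -
  have "(\<lambda>n. p m n * u (Suc m) n) \<longlonglongrightarrow> pstar m * ustar (Suc m)"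
    using plim ulim by (intro tendsto_intros) auto
  moreover have "eventually (\<lambda>n. p m n * u (Suc m) n = 1) sequentially"
    using eventually_gt_at_top[of m]
    by eventually_elim (simp add: u_Suc p_pos less_imp_neq[symmetric])
  ultimately have "(\<lambda>n. 1) \<longlonglongrightarrow> pstar m * ustar (Suc m)"
    by (rule Lim_transform_eventually)
  then show ?thesis
    by (simp add: LIMSEQ_const_iff)
qed

lemma pstar_pos: "0 < pstar m"
proof -
  have "eventually (\<lambda>n. 0 \<le> p m n) sequentially"
    using eventually_gt_at_top[of m] by eventually_elim (simp add: p_pos less_imp_le)
  then have "0 \<le> pstar m"
    using plim by (intro tendsto_lowerbound) auto
  moreover have "pstar m \<noteq> 0"
    using pstar_mult_ustar_Suc[of m] by auto
  ultimately show ?thesis by simp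
qed

lemma ustar_Suc: "ustar (Suc m) = 1 / pstar m"
  using pstar_mult_ustar_Suc[of m] pstar_pos[of m] by (simp add: field_simps)

lemma ustar_0: "ustar 0 = 0"
proof -
  have "eventually (\<lambda>n. 0 = u 0 n) sequentially"
    using eventually_gt_at_top[of 0] by eventually_elim (simp add: u_0)
  with tendsto_const have "(\<lambda>n. u 0 n) \<longlonglongrightarrow> 0"
    by (rule Lim_transform_eventually)
  with ulim show ?thesis
    using LIMSEQ_unique by blast
qed

lemma pstar_p_next: "pstar (Suc (Suc m)) = p_next (pstar m) (pstar (Suc m))"
  by (simp add: pstar_Suc ustar_Suc p_next_def)

lemma pstar_1: "pstar 1 = (pstar 0)\<^sup>2 - 1"
  using pstar_Suc[of 0] ustar_0 by simp

lemma pstar_no_rise: "\<not> (1 < pstar (Suc m) \<and> pstar m < pstar (Suc m))"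
proof
  assume rise: "1 < pstar (Suc m) \<and> pstar m < pstar (Suc m)"
  have "eventually (\<lambda>n. 1 < p (Suc m) n) sequentially"
    using plim rise order_tendstoD(1) by blast
  moreover have "eventually (\<lambda>n. 0 < p (Suc m) n - p m n) sequentially"
    using plim rise by (intro order_tendstoD(1)[of _ "pstar (Suc m) - pstar m"] tendsto_intros) auto
  ultimately have "eventually (\<lambda>n. False) sequentially"
    using eventually_gt_at_top[of m]
  proof eventually_elim
    case (elim n)
    then show False
      using traj traj_no_rise_above_one[of n "\<lambda>j. p j n" "\<lambda>j. u j n" m] by simp
  qed
  then show False by simp
qed

end

theorem mainTheorem11:
  fixes p u :: "nat \<Rightarrow> nat \<Rightarrow> real" and pstar ustar :: "nat \<Rightarrow> real"
  assumes traj: "\<forall>n\<ge>1. is_traj n (\<lambda>j. p j n) (\<lambda>j. u j n)"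
    and plim: "\<forall>j. (\<lambda>n. p j n) \<longlonglongrightarrow> pstar j"
    and ulim: "\<forall>j. (\<lambda>n. u j n) \<longlonglongrightarrow> ustar j"
  shows "pstar \<longlonglongrightarrow> 1 \<and> ustar \<longlonglongrightarrow> 1 \<and> (\<lambda>j. 1 - ustar j) \<longlonglongrightarrow> 0"
proof -
  interpret trajectory_limits p u pstar ustar
    using assms by unfold_locales
  have pstar_lim: "pstar \<longlonglongrightarrow> 1"
    using pstar_pos pstar_p_next pstar_1 pstar_no_rise by (rule orbit_tendsto_one)
  have "(\<lambda>m. ustar (Suc m)) \<longlonglongrightarrow> 1 / 1"
    unfolding ustar_Suc by (intro tendsto_intros pstar_lim) simp
  then have ustar_lim: "ustar \<longlonglongrightarrow> 1"
    using LIMSEQ_imp_Suc by simp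
  have "(\<lambda>j. 1 - ustar j) \<longlonglongrightarrow> 1 - 1"
    by (intro tendsto_intros ustar_lim)
  with pstar_lim ustar_lim show ?thesis by simp
qed

end
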